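(* Let $g>0$ and let $(\rho A):[0,1]\to(0,\infty)$ be a continuous mass density, with $F(s):=\int_0^s g(\rho A)(\xi)\,d\xi$. Let $\hat\nu:\mathbb R\times[0,1]\to[\nu_0,\nu_1]$ be a stretch-limiting constitutive function as described in the context. Let $b\in[\nu_0,\nu_1]$. Then there exists $N(0)\in\mathbb R$ such that, with $$N(s):=N(0)+F(s),\qquad \mathbf n(s):=N(s)\mathbf k,\qquad \mathbf r(s):=\Big(\int_0^s\hat\nu(N(\xi),\xi)\,d\xi\Big)\mathbf k,\qquad s\in[0,1],$$ the triple $(N,\mathbf n,\mathbf r)$ solves the vertical catenary problem $$\mathbf n(s)=\mathbf n(0)+F(s)\mathbf k,\quad \mathbf r(s)=z(s)\mathbf k,\quad \mathbf r(0)=\mathbf 0,\quad \mathbf r(1)=b\mathbf k,$$ with $\mathbf n(s)=N(s)\frac{\mathbf r_s(s)}{|\mathbf r_s(s)|}$ and $|\mathbf r_s(s)|=\hat\nu(N(s),s)$ for all $s\in[0,1]$. If $b\in(\nu_0,\nu_1)$, then $N(0)$ is unique (and hence $\mathbf r$ is unique). If $b=\nu_0$ or $b=\nu_1$, then $\mathbf r$ is unique.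
   Context: $\{\mathbf i,\mathbf j,\mathbf k\}$ is a fixed right-handed orthonormal basis of Euclidean 3-space, with $\mathbf k$ vertical. A string configuration is a curve $s\mapsto\mathbf r(s)$, $s\in[0,1]$, with stretch $\nu(s)=|\mathbf r_s(s)|>0$; $N$ is the tension and $\mathbf n=N\mathbf r_s/|\mathbf r_s|$ the contact force. Stretch-limited constitutive relation: $\nu(s)=\hat\nu(N(s),s)$, where there exist constants $N_0<0<N_1$ and $0<\nu_0<1<\nu_1$ such that for all $s$: $\hat\nu(N,s)=\nu_0$ for $N\le N_0$, $\hat\nu(N,s)=\nu_1$ for $N\ge N_1$, $\hat\nu(\cdot,s)\in C^\infty([N_0,N_1];[\nu_0,\nu_1])$, $\hat\nu(0,s)=1$, and there is $c>0$ with $\partial_N\hat\nu(N,s)\ge c$ for all $(N,s)\in[N_0,N_1]\times[0,1]$. *)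

theory Defs
  imports "HOL-Analysis.Analysis"
begin

definition ivec :: "real^3" where "ivec = axis 1 1"
definition jvec :: "real^3" where "jvec = axis 2 1"
definition kvec :: "real^3" where "kvec = axis 3 1"

text \<open>C-infinity on a closed interval: a tower of derivatives (one-sided at the ends).\<close>
definition smooth_on_interval :: "(real \<Rightarrow> real) \<Rightarrow> real \<Rightarrow> real \<Rightarrow> (nat \<Rightarrow> real \<Rightarrow> real) \<Rightarrow> bool" where
  "smooth_on_interval f a b D \<longleftrightarrow>
     D 0 = f \<and> (\<forall>m. \<forall>x\<in>{a..b}. (D m has_real_derivative D (Suc m) x) (at x within {a..b}))"

definition stretch_limited ::
  "(real \<Rightarrow> real \<Rightarrow> real) \<Rightarrow> real \<Rightarrow> real \<Rightarrow> real \<Rightarrow> real \<Rightarrow> bool" where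
  "stretch_limited nuhat N0 N1 nu0 nu1 \<longleftrightarrow>
     N0 < 0 \<and> 0 < N1 \<and> 0 < nu0 \<and> nu0 < 1 \<and> 1 < nu1 \<and>
     (\<forall>s\<in>{0..1}. \<forall>N. N \<le> N0 \<longrightarrow> nuhat N s = nu0) \<and>
     (\<forall>s\<in>{0..1}. \<forall>N. N \<ge> N1 \<longrightarrow> nuhat N s = nu1) \<and>
     (\<forall>s\<in>{0..1}. \<forall>N\<in>{N0..N1}. nu0 \<le> nuhat N s \<and> nuhat N s \<le> nu1) \<and>
     (\<forall>s\<in>{0..1}. nuhat 0 s = 1) \<and>
     (\<exists>c>0. \<forall>s\<in>{0..1}. \<exists>D. smooth_on_interval (\<lambda>N. nuhat N s) N0 N1 D \<and>
                                 (\<forall>N\<in>{N0..N1}. D 1 N \<ge> c))"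

definition catF :: "real \<Rightarrow> (real \<Rightarrow> real) \<Rightarrow> real \<Rightarrow> real" where
  "catF g rhoA s = integral {0..s} (\<lambda>\<xi>. g * rhoA \<xi>)"

definition vertical_catenary_solution ::
  "(real \<Rightarrow> real \<Rightarrow> real) \<Rightarrow> real \<Rightarrow> (real \<Rightarrow> real) \<Rightarrow> real \<Rightarrow>
   (real \<Rightarrow> real) \<Rightarrow> (real \<Rightarrow> real^3) \<Rightarrow> (real \<Rightarrow> real^3) \<Rightarrow> bool" where
  "vertical_catenary_solution nuhat g rhoA b N n r \<longleftrightarrow>
     (\<forall>s\<in>{0..1}. n s = n 0 + catF g rhoA s *\<^sub>R kvec) \<and>
     (\<exists>z. \<forall>s\<in>{0..1}. r s = z s *\<^sub>R kvec) \<and>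
     r 0 = 0 \<and> r 1 = b *\<^sub>R kvec \<and>
     (\<forall>s\<in>{0..1}. \<exists>v. (r has_vector_derivative v) (at s within {0..1}) \<and> v \<noteq> 0 \<and>
          n s = N s *\<^sub>R ((1 / norm v) *\<^sub>R v) \<and> norm v = nuhat (N s) s)"

definition catN :: "real \<Rightarrow> (real \<Rightarrow> real) \<Rightarrow> real \<Rightarrow> real \<Rightarrow> real" where
  "catN g rhoA a s = a + catF g rhoA s"
definition catn :: "real \<Rightarrow> (real \<Rightarrow> real) \<Rightarrow> real \<Rightarrow> real \<Rightarrow> real^3" where
  "catn g rhoA a s = catN g rhoA a s *\<^sub>R kvec"
definition catr :: "(real \<Rightarrow> real \<Rightarrow> real) \<Rightarrow> real \<Rightarrow> (real \<Rightarrow> real) \<Rightarrow> real \<Rightarrow> real \<Rightarrow> real^3" where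
  "catr nuhat g rhoA a s = integral {0..s} (\<lambda>\<xi>. nuhat (catN g rhoA a \<xi>) \<xi>) *\<^sub>R kvec"

end

theory Submission imports Defs begin

(*
  For N(0) = a the candidate string hangs vertically with stretch nu_a(s) = nuhat(a + F s, s), so
  the catenary problem reduces to the scalar equation z_a(1) = integral of nu_a over [0,1] = b.
  The map a |-> z_a(1) is continuous and nondecreasing, equals nu0 for a <= N0 - F 1 and nu1 for
  a >= N1, so the intermediate value theorem gives a solution. For two solutions a < a' we have
  nu_a <= nu_a' with equal integrals, hence nu_a = nu_a' and the string is unique. As nuhat(-, s)
  is strictly increasing on [N0, N1] and constant outside, nu_a then only takes the values nu0
  and nu1; being continuous it is constant, which forces b = nu0 or b = nu1.
*)

lemma smooth_on_interval_strict_mono_on: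
  assumes f: "smooth_on_interval f a b D" and pos: "\<And>x. x \<in> {a..b} \<Longrightarrow> D 1 x > 0"
  shows "strict_mono_on {a..b} f"
proof (rule strict_mono_onI)
  fix x y assume x: "x \<in> {a..b}" and y: "y \<in> {a..b}" and "x < y"
  have der: "(f has_real_derivative D 1 t) (at t within {a..b})" if "t \<in> {a..b}" for t
    using f that unfolding smooth_on_interval_def by (metis One_nat_def)
  then have "continuous_on {a..b} f"
    using DERIV_continuous continuous_on_eq_continuous_within by blast
  show "f x < f y"
  proof (rule DERIV_pos_imp_increasing_open[OF \<open>x < y\<close>])
    fix t assume "x < t" "t < y"
    then have t: "a < t" "t < b" using x y by auto
    then have "at t within {a..b} = at t" by (intro at_within_Icc_at)
    then have "DERIV f t :> D 1 t" using der[of t] t by simp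
    then show "\<exists>d. DERIV f t :> d \<and> d > 0"
      using pos t by auto
  next
    show "continuous_on {x..y} f"
      by (rule continuous_on_subset[OF \<open>continuous_on {a..b} f\<close>]) (use x y in auto)
  qed
qed

lemma stretch_limited_N0_lt_N1: "stretch_limited nuhat N0 N1 nu0 nu1 \<Longrightarrow> N0 < N1"
  unfolding stretch_limited_def by simp

lemma stretch_limited_below:
  "stretch_limited nuhat N0 N1 nu0 nu1 \<Longrightarrow> s \<in> {0..1} \<Longrightarrow> N \<le> N0 \<Longrightarrow> nuhat N s = nu0"
  unfolding stretch_limited_def by auto

lemma stretch_limited_above:
  "stretch_limited nuhat N0 N1 nu0 nu1 \<Longrightarrow> s \<in> {0..1} \<Longrightarrow> N1 \<le> N \<Longrightarrow> nuhat N s = nu1"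
  unfolding stretch_limited_def by auto

lemma stretch_limited_clamp:
  assumes "stretch_limited nuhat N0 N1 nu0 nu1" and "s \<in> {0..1}"
  shows "nuhat N s = nuhat (min N1 (max N0 N)) s"
  using assms unfolding stretch_limited_def min_def max_def
  by (smt (verit))

lemma stretch_limited_strict_mono_on:
  assumes SL: "stretch_limited nuhat N0 N1 nu0 nu1" and s: "s \<in> {0..1}"
  shows "strict_mono_on {N0..N1} (\<lambda>N. nuhat N s)"
proof -
  obtain c D where "c > 0" and D: "smooth_on_interval (\<lambda>N. nuhat N s) N0 N1 D"
    and "\<forall>N\<in>{N0..N1}. D 1 N \<ge> c"
    using SL s unfolding stretch_limited_def by metis
  then show ?thesis
    by (intro smooth_on_interval_strict_mono_on[OF D]) fastforce
qed

lemma stretch_limited_mono: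
  assumes SL: "stretch_limited nuhat N0 N1 nu0 nu1" and s: "s \<in> {0..1}"
  shows "mono (\<lambda>N. nuhat N s)"
proof (rule monoI)
  fix x y :: real assume "x \<le> y"
  have "N0 < N1" by (rule stretch_limited_N0_lt_N1[OF SL])
  then have "nuhat (min N1 (max N0 x)) s \<le> nuhat (min N1 (max N0 y)) s"
    using strict_mono_on_leD[OF stretch_limited_strict_mono_on[OF SL s]] \<open>x \<le> y\<close> by auto
  then show "nuhat x s \<le> nuhat y s"
    using stretch_limited_clamp[OF SL s] by metis
qed

lemma stretch_limited_range:
  assumes SL: "stretch_limited nuhat N0 N1 nu0 nu1" and s: "s \<in> {0..1}"
  shows "nu0 \<le> nuhat N s \<and> nuhat N s \<le> nu1"
proof -
  have "N0 < N1" by (rule stretch_limited_N0_lt_N1[OF SL])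
  then have "min N1 (max N0 N) \<in> {N0..N1}" by auto
  then show ?thesis
    using SL s stretch_limited_clamp[OF SL s, of N] unfolding stretch_limited_def by auto
qed

lemma stretch_limited_eq_imp_saturated:
  assumes SL: "stretch_limited nuhat N0 N1 nu0 nu1" and s: "s \<in> {0..1}"
    and "x < y" and eq: "nuhat x s = nuhat y s"
  shows "nuhat x s = nu0 \<or> nuhat x s = nu1"
proof -
  define clamp where "clamp N = min N1 (max N0 N)" for N :: real
  have "N0 < N1" by (rule stretch_limited_N0_lt_N1[OF SL])
  then have "clamp x \<in> {N0..N1}" "clamp y \<in> {N0..N1}" unfolding clamp_def by auto
  moreover have "nuhat (clamp x) s = nuhat (clamp y) s"
    using eq stretch_limited_clamp[OF SL s] unfolding clamp_def by metis
  ultimately have "clamp x = clamp y"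
    using strict_mono_on_imp_inj_on[OF stretch_limited_strict_mono_on[OF SL s]] by (auto dest: inj_onD)
  with \<open>x < y\<close> have "clamp x = N0 \<or> clamp x = N1" unfolding clamp_def by auto
  then show ?thesis
    using stretch_limited_clamp[OF SL s, of x] stretch_limited_below[OF SL s, of N0]
      stretch_limited_above[OF SL s, of N1]
    unfolding clamp_def by auto
qed

lemma continuous_on_catF:
  assumes "continuous_on {0..1} rhoA"
  shows "continuous_on {0..1} (catF g rhoA)"
  unfolding catF_def
  using assms by (intro indefinite_integral_continuous_1 integrable_continuous_real continuous_intros)

lemma catF_mono:
  assumes "continuous_on {0..1} rhoA" and "0 \<le> g" and "\<forall>s\<in>{0..1}. 0 \<le> rhoA s"
    and "0 \<le> s" "s \<le> t" "t \<le> 1"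
  shows "catF g rhoA s \<le> catF g rhoA t"
proof -
  have "(\<lambda>\<xi>. g * rhoA \<xi>) integrable_on {0..1}"
    using assms(1) by (intro integrable_continuous_real continuous_intros)
  then show ?thesis
    unfolding catF_def using assms(2-6)
    by (intro integral_subset_le integrable_on_subinterval) auto
qed

locale vertical_catenary =
  fixes nuhat :: "real \<Rightarrow> real \<Rightarrow> real" and N0 N1 nu0 nu1 g :: real
    and rhoA :: "real \<Rightarrow> real"
  assumes SL: "stretch_limited nuhat N0 N1 nu0 nu1"
    and nu_cont: "continuous_on (UNIV \<times> {0..1}) (\<lambda>(N, s). nuhat N s)"
    and g_pos: "g > 0"
    and rho_cont: "continuous_on {0..1} rhoA"
    and rho_pos: "\<forall>s\<in>{0..1}. rhoA s > 0"
begin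

text \<open>For N(0) = a, \<open>stretch a\<close> and \<open>height a\<close> are the stretch \<nu> and the vertical coordinate z
  of the candidate string.\<close>

definition stretch :: "real \<Rightarrow> real \<Rightarrow> real" where
  "stretch a \<xi> = nuhat (catN g rhoA a \<xi>) \<xi>"

definition height :: "real \<Rightarrow> real \<Rightarrow> real" where
  "height a s = integral {0..s} (stretch a)"

lemma catr_eq_height: "catr nuhat g rhoA a s = height a s *\<^sub>R kvec"
  unfolding catr_def height_def stretch_def ..

lemma catF_nonneg: "s \<in> {0..1} \<Longrightarrow> 0 \<le> catF g rhoA s"
  using catF_mono[OF rho_cont, of g 0 s] g_pos rho_pos by (simp add: catF_def less_imp_le)

lemma catF_le_catF_1: "s \<in> {0..1} \<Longrightarrow> catF g rhoA s \<le> catF g rhoA 1"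
  using catF_mono[OF rho_cont, of g s 1] g_pos rho_pos by (simp add: less_imp_le)

lemma continuous_on_stretch_param: "continuous_on (UNIV \<times> {0..1}) (\<lambda>(a, \<xi>). stretch a \<xi>)"
proof -
  have "continuous_on (UNIV \<times> {0..1}) (\<lambda>p. (fst p + catF g rhoA (snd p), snd p))"
    by (intro continuous_intros continuous_on_compose2[OF continuous_on_catF[OF rho_cont]]) auto
  then have "continuous_on (UNIV \<times> {0..1})
      ((\<lambda>(N, s). nuhat N s) \<circ> (\<lambda>p. (fst p + catF g rhoA (snd p), snd p)))"
    by (rule continuous_on_compose[OF _ continuous_on_subset[OF nu_cont]]) auto
  then show ?thesis
    unfolding stretch_def catN_def by (simp add: o_def case_prod_beta)
qed

lemma continuous_on_stretch: "continuous_on {0..1} (stretch a)"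
proof -
  have "continuous_on {0..1} ((\<lambda>(a, \<xi>). stretch a \<xi>) \<circ> Pair a)"
    by (intro continuous_on_compose continuous_on_subset[OF continuous_on_stretch_param]
        continuous_intros) auto
  then show ?thesis by (simp add: o_def)
qed

lemma stretch_pos: "\<xi> \<in> {0..1} \<Longrightarrow> 0 < stretch a \<xi>"
  using stretch_limited_range[OF SL] SL unfolding stretch_def stretch_limited_def
  by (meson less_le_trans)

lemma stretch_mono: "a \<le> a' \<Longrightarrow> \<xi> \<in> {0..1} \<Longrightarrow> stretch a \<xi> \<le> stretch a' \<xi>"
  unfolding stretch_def catN_def by (intro monoD[OF stretch_limited_mono[OF SL]]) auto

lemma solution_iff_height:
  "vertical_catenary_solution nuhat g rhoA b (catN g rhoA a) (catn g rhoA a) (catr nuhat g rhoA a)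
     \<longleftrightarrow> height a 1 = b"
proof
  have "kvec \<noteq> 0" unfolding kvec_def by (metis norm_axis_1 norm_zero zero_neq_one)
  then show "height a 1 = b" if "vertical_catenary_solution nuhat g rhoA b
      (catN g rhoA a) (catn g rhoA a) (catr nuhat g rhoA a)"
    using that unfolding vertical_catenary_solution_def catr_eq_height by simp
next
  assume end_height: "height a 1 = b"
  have "norm kvec = 1" unfolding kvec_def by simp
  have tangent: "(catr nuhat g rhoA a has_vector_derivative stretch a s *\<^sub>R kvec) (at s within {0..1})"
    if "s \<in> {0..1}" for s
    using has_vector_derivative_scaleR[OF integral_has_vector_derivative
        [OF continuous_on_stretch that, unfolded has_real_derivative_iff_has_vector_derivative[symmetric]],
        of "\<lambda>_. kvec" 0]
    unfolding catr_eq_height height_def by simp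
  show "vertical_catenary_solution nuhat g rhoA b (catN g rhoA a) (catn g rhoA a) (catr nuhat g rhoA a)"
    unfolding vertical_catenary_solution_def
  proof (intro conjI ballI exI)
    fix s :: real assume s: "s \<in> {0..1}"
    show "catn g rhoA a s = catn g rhoA a 0 + catF g rhoA s *\<^sub>R kvec"
      unfolding catn_def catN_def catF_def by (simp add: algebra_simps)
    show "catr nuhat g rhoA a s = height a s *\<^sub>R kvec" by (rule catr_eq_height)
    show "(catr nuhat g rhoA a has_vector_derivative stretch a s *\<^sub>R kvec) (at s within {0..1})"
      using tangent[OF s] .
    show "stretch a s *\<^sub>R kvec \<noteq> 0"
      using stretch_pos[OF s, of a] \<open>norm kvec = 1\<close> by auto
    show "catn g rhoA a s = catN g rhoA a s *\<^sub>R ((1 / norm (stretch a s *\<^sub>R kvec)) *\<^sub>R (stretch a s *\<^sub>R kvec))"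
      using stretch_pos[OF s, of a] \<open>norm kvec = 1\<close> by (simp add: catn_def)
    show "norm (stretch a s *\<^sub>R kvec) = nuhat (catN g rhoA a s) s"
      using stretch_pos[OF s, of a] \<open>norm kvec = 1\<close> by (simp add: stretch_def)
  qed (use end_height in \<open>simp_all add: catr_eq_height height_def\<close>)
qed

lemma continuous_on_height: "continuous_on UNIV (\<lambda>a. height a 1)"
  unfolding height_def using integral_continuous_on_param[of UNIV 0 1 stretch]
    continuous_on_stretch_param by simp

lemma height_eq_if_stretch_const:
  assumes "\<forall>\<xi>\<in>{0..1}. stretch a \<xi> = c"
  shows "height a 1 = c"
proof -
  have "height a 1 = integral {0..1} (\<lambda>_::real. c)"
    unfolding height_def using assms by (intro integral_cong) auto
  then show ?thesis by simp
qed

lemma height_lower: "height (N0 - catF g rhoA 1) 1 = nu0"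
proof (rule height_eq_if_stretch_const, intro ballI)
  fix \<xi> :: real assume \<xi>: "\<xi> \<in> {0..1}"
  then have "catN g rhoA (N0 - catF g rhoA 1) \<xi> \<le> N0"
    using catF_le_catF_1 unfolding catN_def by simp
  then show "stretch (N0 - catF g rhoA 1) \<xi> = nu0"
    using stretch_limited_below[OF SL \<xi>] unfolding stretch_def by blast
qed

lemma height_upper: "height N1 1 = nu1"
proof (rule height_eq_if_stretch_const, intro ballI)
  fix \<xi> :: real assume \<xi>: "\<xi> \<in> {0..1}"
  then have "N1 \<le> catN g rhoA N1 \<xi>"
    using catF_nonneg unfolding catN_def by simp
  then show "stretch N1 \<xi> = nu1"
    using stretch_limited_above[OF SL \<xi>] unfolding stretch_def by blast
qed

lemma height_surj:
  assumes "nu0 \<le> b" "b \<le> nu1"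
  shows "\<exists>a. height a 1 = b"
proof -
  have "N0 - catF g rhoA 1 \<le> N1"
    using stretch_limited_N0_lt_N1[OF SL] catF_nonneg[of 1] by simp
  moreover have "continuous_on {N0 - catF g rhoA 1..N1} (\<lambda>a. height a 1)"
    by (rule continuous_on_subset[OF continuous_on_height]) simp
  ultimately show ?thesis
    using IVT'[of "\<lambda>a. height a 1" "N0 - catF g rhoA 1" b N1] height_lower height_upper assms
    by auto
qed

lemma stretch_eq_if_height_eq_le:
  assumes eq: "height a 1 = height a' 1" and "a \<le> a'" and \<xi>: "\<xi> \<in> {0..1}"
  shows "stretch a \<xi> = stretch a' \<xi>"
proof -
  have "integral {0..1} (\<lambda>\<xi>. stretch a' \<xi> - stretch a \<xi>) = 0"
    using eq unfolding height_def
    by (subst integral_diff) (auto intro: integrable_continuous_real continuous_on_stretch)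
  moreover have "continuous_on {0..1} (\<lambda>\<xi>. stretch a' \<xi> - stretch a \<xi>)"
    by (intro continuous_intros continuous_on_stretch)
  ultimately have "\<forall>\<xi>\<in>{0..1}. stretch a' \<xi> - stretch a \<xi> = 0"
    using integral_eq_0_iff[of 0 1] stretch_mono[OF \<open>a \<le> a'\<close>] by simp
  then show ?thesis using \<xi> by simp
qed

lemma stretch_eq_if_height_eq:
  assumes "height a 1 = height a' 1" and "\<xi> \<in> {0..1}"
  shows "stretch a \<xi> = stretch a' \<xi>"
proof (cases "a \<le> a'")
  case True
  then show ?thesis using stretch_eq_if_height_eq_le assms by blast
next
  case False
  then show ?thesis using stretch_eq_if_height_eq_le[of a' a] assms by simp
qed

lemma height_eq_less_imp_saturated:
  assumes "a < a'" and eq: "height a 1 = height a' 1"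
  shows "height a 1 = nu0 \<or> height a 1 = nu1"
proof -
  have saturated: "stretch a ` {0..1} \<subseteq> {nu0, nu1}"
  proof
    fix y assume "y \<in> stretch a ` {0..1}"
    then obtain \<xi> where \<xi>: "\<xi> \<in> {0..1}" and y: "y = stretch a \<xi>" by blast
    have "catN g rhoA a \<xi> < catN g rhoA a' \<xi>"
      using \<open>a < a'\<close> unfolding catN_def by simp
    then have "stretch a \<xi> = nu0 \<or> stretch a \<xi> = nu1"
      using stretch_limited_eq_imp_saturated[OF SL \<xi>] stretch_eq_if_height_eq[OF eq \<xi>]
      unfolding stretch_def by simp
    then show "y \<in> {nu0, nu1}" by (simp add: y)
  qed
  then have "finite (stretch a ` {0..1})"
    by (rule finite_subset) simp
  then have "stretch a constant_on {0..1}"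
    by (intro continuous_finite_range_constant connected_Icc continuous_on_stretch)
  then obtain c where c: "\<forall>\<xi>\<in>{0..1}. stretch a \<xi> = c"
    unfolding constant_on_def by blast
  then have "c \<in> {nu0, nu1}"
    using saturated by force
  then show ?thesis
    using height_eq_if_stretch_const[OF c] by auto
qed

lemma height_inj_on_interior:
  assumes eq: "height a 1 = height a' 1" and inside: "nu0 < height a 1" "height a 1 < nu1"
  shows "a = a'"
proof (cases a a' rule: linorder_cases)
  case less
  then show ?thesis using height_eq_less_imp_saturated[OF less eq] inside by auto
next
  case greater
  then show ?thesis using height_eq_less_imp_saturated[OF greater eq[symmetric]] eq inside by auto
qed

end

theorem proposition3p1:
  fixes nuhat :: "real \<Rightarrow> real \<Rightarrow> real" and N0 N1 nu0 nu1 g b :: real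
    and rhoA :: "real \<Rightarrow> real"
  assumes SL: "stretch_limited nuhat N0 N1 nu0 nu1"
    and nu_cont: "continuous_on (UNIV \<times> {0..1}) (\<lambda>(N, s). nuhat N s)"
    and nu_range: "\<forall>N. \<forall>s\<in>{0..1}. nu0 \<le> nuhat N s \<and> nuhat N s \<le> nu1"
    and g_pos: "g > 0"
    and rho_cont: "continuous_on {0..1} rhoA"
    and rho_pos: "\<forall>s\<in>{0..1}. rhoA s > 0"
    and b_range: "nu0 \<le> b" "b \<le> nu1"
  shows "(\<exists>a. vertical_catenary_solution nuhat g rhoA b
                 (catN g rhoA a) (catn g rhoA a) (catr nuhat g rhoA a))
       \<and> (nu0 < b \<and> b < nu1 \<longrightarrow>
            (\<exists>!a. vertical_catenary_solution nuhat g rhoA b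
                 (catN g rhoA a) (catn g rhoA a) (catr nuhat g rhoA a)))
       \<and> (b = nu0 \<or> b = nu1 \<longrightarrow>
            (\<forall>a a'. vertical_catenary_solution nuhat g rhoA b
                       (catN g rhoA a) (catn g rhoA a) (catr nuhat g rhoA a)
                   \<and> vertical_catenary_solution nuhat g rhoA b
                       (catN g rhoA a') (catn g rhoA a') (catr nuhat g rhoA a')
                   \<longrightarrow> (\<forall>s\<in>{0..1}. catr nuhat g rhoA a s = catr nuhat g rhoA a' s)))"
proof -
  interpret vertical_catenary nuhat N0 N1 nu0 nu1 g rhoA
    using SL nu_cont g_pos rho_cont rho_pos by unfold_locales
  show ?thesis
    unfolding solution_iff_height
  proof (intro conjI impI allI ballI)
    obtain a where a: "height a 1 = b"
      using height_surj[OF b_range] by blast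
    then show "\<exists>a. height a 1 = b" ..
    show "\<exists>!a. height a 1 = b" if "nu0 < b \<and> b < nu1"
      using a that by (intro ex1I[of _ a]) (auto intro: height_inj_on_interior)
    show "catr nuhat g rhoA a s = catr nuhat g rhoA a' s"
      if "height a 1 = b \<and> height a' 1 = b" and "s \<in> {0..1}" for a a' s
    proof -
      have "height a s = height a' s"
        unfolding height_def using that stretch_eq_if_height_eq[of a a']
        by (intro integral_cong) auto
      then show ?thesis by (simp add: catr_eq_height)
    qed
  qed
qed

end
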